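(* Let $R$ be an abelian $\star$-ring such that for every $r\in Reg(R)$ and every $y\in R$, whenever $ry$ is idempotent it is a projection and whenever $yr$ is idempotent it is a projection. Then $R$ is $\star$-$r$-clean if and only if $R$ is $\star$-clean.
   Context: Rings are associative with identity; $R$ is abelian if all its idempotents are central. A $\star$-ring is a ring $R$ with a map $\star:R\to R$ satisfying $(x+y)^\star=x^\star+y^\star$, $(xy)^\star=y^\star x^\star$, $(x^\star)^\star=x$. A projection is $p\in R$ with $p^2=p=p^\star$; $P(R)$ denotes the set of projections. $U(R)$ denotes the units and $Reg(R)=\{r\in R: r=ryr \text{ for some } y\in R\}$ the regular elements. $R$ is $\star$-clean if every $x\in R$ can be written $x=u+p$ with $u\in U(R)$, $p\in P(R)$. $R$ is $\star$-$r$-clean if every $x\in R$ can be written $x=r+p$ with $r\in Reg(R)$, $p\in P(R)$. *)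

theory Defs
  imports Main
begin

definition star_ring :: "('a::ring_1 \<Rightarrow> 'a) \<Rightarrow> bool" where
  "star_ring st \<longleftrightarrow>
     (\<forall>x y. st (x + y) = st x + st y) \<and>
     (\<forall>x y. st (x * y) = st y * st x) \<and>
     (\<forall>x. st (st x) = x)"

definition idempotent :: "'a::ring_1 \<Rightarrow> bool" where
  "idempotent e \<longleftrightarrow> e * e = e"

definition abelian_ring :: "'a::ring_1 itself \<Rightarrow> bool" where
  "abelian_ring _ \<longleftrightarrow> (\<forall>e::'a. idempotent e \<longrightarrow> (\<forall>x. e * x = x * e))"

definition projection :: "('a::ring_1 \<Rightarrow> 'a) \<Rightarrow> 'a \<Rightarrow> bool" where
  "projection st p \<longleftrightarrow> p * p = p \<and> p = st p"

definition is_unit :: "'a::ring_1 \<Rightarrow> bool" where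
  "is_unit u \<longleftrightarrow> (\<exists>v. u * v = 1 \<and> v * u = 1)"

definition regular :: "'a::ring_1 \<Rightarrow> bool" where
  "regular r \<longleftrightarrow> (\<exists>y. r = r * y * r)"

definition star_clean :: "('a::ring_1 \<Rightarrow> 'a) \<Rightarrow> bool" where
  "star_clean st \<longleftrightarrow> (\<forall>x. \<exists>u p. is_unit u \<and> projection st p \<and> x = u + p)"

definition star_r_clean :: "('a::ring_1 \<Rightarrow> 'a) \<Rightarrow> bool" where
  "star_r_clean st \<longleftrightarrow> (\<forall>x. \<exists>r p. regular r \<and> projection st p \<and> x = r + p)"

end

theory Submission
  imports Defs
begin

text \<open>Write \<open>x = r + p\<close> with \<open>r\<close> regular and \<open>p\<close> a projection. In an abelian ring a regular
  element has an inner inverse \<open>z\<close> commuting with it, so \<open>e = r z\<close> is a central idempotent,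
  a projection by hypothesis. Twisting by the central involution \<open>w = 2p - 1\<close> on the
  complement of \<open>e\<close> gives the unit \<open>u = r + w (1 - e)\<close> with inverse \<open>z + w (1 - e)\<close>, and
  \<open>x = u + (p e + (1 - p)(1 - e))\<close>, where the second summand is again a projection.\<close>

lemma unit_imp_regular: "is_unit (u::'a::ring_1) \<Longrightarrow> regular u"
  unfolding is_unit_def regular_def by (metis mult.assoc mult_1_right)

lemma star_one:
  assumes "star_ring st"
  shows "st 1 = (1::'a::ring_1)"
proof -
  have "st (st 1 * 1) = st 1 * st (st 1)" and "st (st 1) = 1"
    using assms unfolding star_ring_def by blast+
  then show ?thesis by simp
qed

lemma star_diff:
  assumes "star_ring st"
  shows "st (x - y) = st x - st (y::'a::ring_1)"
proof -
  have "st (x - y) + st y = st x"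
    using assms unfolding star_ring_def by (metis diff_add_cancel)
  then show ?thesis by (simp add: eq_diff_eq)
qed

lemma abelian_regular_commuting_inner_inverse:
  fixes r :: "'a::ring_1"
  assumes "abelian_ring TYPE('a)" and "regular r"
  obtains z where "r * z * r = r" and "z * r * z = z" and "r * z = z * r"
proof -
  have central: "\<And>e x. e * e = e \<Longrightarrow> e * x = x * (e::'a)"
    using assms(1) unfolding abelian_ring_def idempotent_def by blast
  obtain y where ryr: "r * y * r = r"
    using assms(2) unfolding regular_def by metis
  define z where "z = y * r * y"
  have rzr: "r * z * r = r" and zrz: "z * r * z = z"
    unfolding z_def using ryr by (metis mult.assoc)+
  have e_central: "\<And>x. r * z * x = x * (r * z)" and f_central: "\<And>x. z * r * x = x * (z * r)"
    using central rzr zrz by (metis mult.assoc)+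
  have "r * z = z * r * (r * z)"
    using f_central rzr by (metis mult.assoc)
  also have "\<dots> = z * r"
    using e_central rzr by (metis mult.assoc)
  finally show thesis using that rzr zrz by blast
qed

lemma unit_add_twisted_complement:
  fixes r z w :: "'a::ring_1"
  assumes rzr: "r * z * r = r" and zrz: "z * r * z = z" and comm: "r * z = z * r"
    and ww: "w * w = 1" and wr: "w * r = r * w" and wz: "w * z = z * w"
  shows "is_unit (r + w * (1 - r * z))"
proof -
  define c where "c = 1 - r * z"
  have "r * (r * z) = r" and "r * z * z = z"
    using rzr zrz comm by (metis mult.assoc)+
  then have rc: "r * c = 0" and cr: "c * r = 0" and zc: "z * c = 0" and cz: "c * z = 0"
    unfolding c_def using rzr zrz by (simp_all add: right_diff_distrib left_diff_distrib mult.assoc)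
  have cc: "c * c = c"
  proof -
    have "c * c = c - r * (z * c)" by (simp add: c_def left_diff_distrib mult.assoc)
    then show ?thesis using zc by simp
  qed
  have wc: "w * c = c * w"
    unfolding c_def using wr wz by (simp add: algebra_simps) (metis mult.assoc)
  have twist_sq: "w * c * (w * c) = c"
    by (metis mult.assoc wc ww cc mult_1_left)
  have "r * (w * c) = 0" "w * c * z = 0" "z * (w * c) = 0" "w * c * r = 0"
    by (metis mult.assoc wr wz wc rc cz zc cr mult_zero_left mult_zero_right)+
  then have "(r + w * c) * (z + w * c) = 1" and "(z + w * c) * (r + w * c) = 1"
    using twist_sq comm by (simp_all add: algebra_simps c_def)
  then show ?thesis unfolding is_unit_def c_def by blast
qed

lemma mult_interchange:
  fixes a b c d :: "'a::semigroup_mult"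
  assumes "b * c = c * b"
  shows "a * b * (c * d) = a * c * (b * d)"
  using assms by (metis mult.assoc)

lemma idempotent_add_orthogonal:
  fixes a b :: "'a::ring_1"
  assumes "a * a = a" and "b * b = b" and "a * b = 0" and "b * a = 0"
  shows "(a + b) * (a + b) = a + b"
  using assms by (simp add: distrib_left distrib_right)

lemma projection_combine_commuting:
  fixes p e :: "'a::ring_1"
  assumes st: "star_ring st" and p: "projection st p" and e: "projection st e"
    and pe: "p * e = e * p"
  shows "projection st (p * e + (1 - p) * (1 - e))"
proof -
  have pp: "p * p = p" and ee: "e * e = e" and stp: "st p = p" and ste: "st e = e"
    using p e unfolding projection_def by auto
  have sa: "\<And>x y. st (x + y) = st x + st y" and sm: "\<And>x y. st (x * y) = st y * st x"
    using st unfolding star_ring_def by auto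
  have ep': "e * (1 - p) = (1 - p) * e" and e'p: "(1 - e) * p = p * (1 - e)"
    and e'p': "(1 - e) * (1 - p) = (1 - p) * (1 - e)"
    using pe by (simp_all add: left_diff_distrib right_diff_distrib)
  have "st (1 - p) = 1 - p" and "st (1 - e) = 1 - e"
    by (simp_all add: star_diff[OF st] star_one[OF st] stp ste)
  then have "st (p * e + (1 - p) * (1 - e)) = e * p + (1 - e) * (1 - p)"
    by (simp add: sa sm stp ste)
  also have "\<dots> = p * e + (1 - p) * (1 - e)"
    using pe e'p' by simp
  finally have self_adjoint: "st (p * e + (1 - p) * (1 - e)) = p * e + (1 - p) * (1 - e)" .
  have p_compl: "p * (1 - p) = 0" "(1 - p) * p = 0" "(1 - p) * (1 - p) = 1 - p"
    and e_compl: "e * (1 - e) = 0" "(1 - e) * e = 0" "(1 - e) * (1 - e) = 1 - e"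
    using pp ee by (simp_all add: left_diff_distrib right_diff_distrib)
  have "p * e * (p * e) = p * e" "(1 - p) * (1 - e) * ((1 - p) * (1 - e)) = (1 - p) * (1 - e)"
    "p * e * ((1 - p) * (1 - e)) = 0" "(1 - p) * (1 - e) * (p * e) = 0"
    using mult_interchange[OF pe[symmetric]] mult_interchange[OF e'p'] mult_interchange[OF ep']
      mult_interchange[OF e'p] pp ee p_compl e_compl by simp_all
  then have "(p * e + (1 - p) * (1 - e)) * (p * e + (1 - p) * (1 - e)) = p * e + (1 - p) * (1 - e)"
    by (rule idempotent_add_orthogonal)
  then show ?thesis unfolding projection_def using self_adjoint by simp
qed

lemma unit_add_projection_of_commuting_inner_inverse:
  fixes r :: "'a::ring_1"
  assumes st: "star_ring st" and "abelian_ring TYPE('a)" and p: "projection st p"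
    and rzr: "r * z * r = r" and zrz: "z * r * z = z" and comm: "r * z = z * r"
    and e: "projection st (r * z)"
  shows "\<exists>u q. is_unit u \<and> projection st q \<and> r + p = u + q"
proof -
  have pp: "p * p = p" and p_central: "\<And>a. p * a = a * p"
    using assms(2) p unfolding abelian_ring_def idempotent_def projection_def by blast+
  define w where "w = p + p - 1"
  have ww: "w * w = 1"
    unfolding w_def using pp by (simp add: algebra_simps)
  have w_central: "w * a = a * w" for a
    using p_central[of a] unfolding w_def by (simp add: algebra_simps)
  have "is_unit (r + w * (1 - r * z))"
    by (rule unit_add_twisted_complement[OF rzr zrz comm ww w_central w_central])
  moreover have "projection st (p * (r * z) + (1 - p) * (1 - r * z))"
    using projection_combine_commuting st p e p_central by blast
  moreover have "r + p = (r + w * (1 - r * z)) + (p * (r * z) + (1 - p) * (1 - r * z))"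
    unfolding w_def by (simp add: algebra_simps)
  ultimately show ?thesis by blast
qed

theorem theorem4p17:
  fixes st :: "'a::ring_1 \<Rightarrow> 'a"
  assumes "star_ring st"
    and "abelian_ring TYPE('a)"
    and "\<And>r y. regular r \<Longrightarrow> idempotent (r * y) \<Longrightarrow> projection st (r * y)"
    and "\<And>r y. regular r \<Longrightarrow> idempotent (y * r) \<Longrightarrow> projection st (y * r)"
  shows "star_r_clean st \<longleftrightarrow> star_clean st"
proof
  assume "star_clean st"
  then show "star_r_clean st"
    unfolding star_clean_def star_r_clean_def using unit_imp_regular by blast
next
  assume r_clean: "star_r_clean st"
  show "star_clean st"
    unfolding star_clean_def
  proof
    fix x
    obtain r p where "regular r" and p: "projection st p" and x: "x = r + p"
      using r_clean unfolding star_r_clean_def by blast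
    then obtain z where rzr: "r * z * r = r" and zrz: "z * r * z = z" and comm: "r * z = z * r"
      using abelian_regular_commuting_inner_inverse assms(2) by blast
    have "projection st (r * z)"
      using assms(3)[OF \<open>regular r\<close>] rzr unfolding idempotent_def by (metis mult.assoc)
    then show "\<exists>u q. is_unit u \<and> projection st q \<and> x = u + q"
      unfolding x using unit_add_projection_of_commuting_inner_inverse assms(1,2) p rzr zrz comm
      by blast
  qed
qed

end
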